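(* Let $N>K$ and let $\mathbf{d}_u=(d_1,\dots,d_K)$ be a demand vector with pairwise distinct entries. Let the cache configuration $\mathcal{C}$ be produced by the new placement scheme with $F=\lceil N/M\rceil F'$ packets per file, and let $t=K/\lceil N/M\rceil$. If $$F\le \frac{\lceil N/M\rceil}{2K}\left(1-\frac{1}{\lceil N/M\rceil}\right)\exp\!\left(2t\Big(1-\frac{t}{K}\Big)\Big(1-\frac1K\Big)\right),$$ then $$\mathbb{E}\big[R^{nd}(\mathcal{C},\mathbf{d}_u)\big]\ge \frac12\Big(1-\frac{M}{N}\Big)K,$$ where the expectation is over the random placement.
   Context: Setting: a server holds a library of $N$ files, each split into $F$ packets (packet $f$ of file $n$ denoted $(n,f)$); $K$ users each have a cache holding $M$ files' worth of packets ($M\le N$). For a cache configuration, $S_{n,f}\subseteq[1:K]$ denotes the set of users whose cache stores packet $(n,f)$. User $k$ requests file $d_k$. New placement scheme: $F=\lceil N/M\rceil F'$ with $F'$ a positive integer; the packets of every file are partitioned into $F'$ groups of $\lceil N/M\rceil$ packets each. For every user $k$, file $n$ and group of file $n$, exactly one packet of that group is chosen uniformly at random and stored in user $k$'s cache; all choices are mutually independent. Delivery scheme and its rate $R^{nd}$: for $k\in[1:K]$ and $T\subseteq[1:K]\setminus\{k\}$, let $V_{k,T}$ be the set of packets $f$ of file $d_k$ with $S_{d_k,f}=T$ exactly. For every nonempty $\mathcal{S}\subseteq[1:K]$ the scheme transmits the XOR of the packet vectors $V_{k,\mathcal{S}\setminus\{k\}}$, $k\in\mathcal{S}$ (shorter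 vectors zero-padded to the longest). Its normalized number of transmissions is $$R^{nd}(\mathcal{C},\mathbf{d})=\sum_{\emptyset\ne\mathcal{S}\subseteq[1:K]}\frac{\max_{k\in\mathcal{S}}|V_{k,\mathcal{S}\setminus\{k\}}|}{F}.$$ *)

theory Defs
  imports "HOL-Probability.Probability"
begin

(* Users are 1..K, files 1..N, packets of a file are 0..<F.
   A cache configuration is given by Sset n f = set of users caching packet (n,f). *)

definition Vset :: "nat \<Rightarrow> (nat \<Rightarrow> nat \<Rightarrow> nat set) \<Rightarrow> (nat \<Rightarrow> nat) \<Rightarrow> nat \<Rightarrow> nat set \<Rightarrow> nat set" where
  "Vset F Sset d k T = {f \<in> {0..<F}. Sset (d k) f = T}"

definition R_nd :: "nat \<Rightarrow> nat \<Rightarrow> (nat \<Rightarrow> nat \<Rightarrow> nat set) \<Rightarrow> (nat \<Rightarrow> nat) \<Rightarrow> real" where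
  "R_nd K F Sset d =
     (\<Sum>S\<in>{S. S \<subseteq> {1..K} \<and> S \<noteq> {}}.
        real (Max ((\<lambda>k. card (Vset F Sset d k (S - {k}))) ` S)) / real F)"

(* New placement: q = ceil(N/M) packets per group, F' groups per file, F = q*F'.
   A random choice c(k,n,g) \<in> {0..<q} selects which packet of group g of file n
   user k stores; packet f lies in group f div q at position f mod q. *)
definition placement_choices :: "nat \<Rightarrow> nat \<Rightarrow> nat \<Rightarrow> nat \<Rightarrow> (nat \<times> nat \<times> nat \<Rightarrow> nat) set" where
  "placement_choices K N F' q = ({1..K} \<times> {1..N} \<times> {0..<F'}) \<rightarrow>\<^sub>E {0..<q}"

definition cache_of_choice :: "nat \<Rightarrow> nat \<Rightarrow> (nat \<times> nat \<times> nat \<Rightarrow> nat) \<Rightarrow> nat \<Rightarrow> nat \<Rightarrow> nat set" where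
  "cache_of_choice K q c n f = {k \<in> {1..K}. c (k, n, f div q) = f mod q}"

end

theory Submission
  imports Defs
begin

(* For a fixed placement let a k S = |V_{k, S - {k}}|. A maximum dominates a sum minus all pairwise
   products, so summing over S gives
     F * R_nd >= #(requested packets not cached by their requester) - #(collisions),
   a collision being an ordered pair of such packets of two users that are XOR-ed in the same
   transmission. Every user caches exactly one packet per group, so the first count is at least
   K (F - F'). A collision of (k, f) with (k', f') constrains, for every user j separately, the pair of
   choices j makes in two different groups (the files d k and d k' differ), so it has probability
   (p (1 - p))^2 (1 - 2 p (1 - p))^(K - 2) with p = 1 / ceil (N / M). The hypothesis on F makes the
   expected number of collisions at most K (F - F') / 2, so that E[R_nd] >= K (1 - p) / 2. *)

lemma sum_le_Max_add_sum_products: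
  fixes a :: "'a \<Rightarrow> nat"
  assumes "finite S" "S \<noteq> {}"
  shows "(\<Sum>k\<in>S. a k) \<le> Max (a ` S) + (\<Sum>k\<in>S. \<Sum>k'\<in>S - {k}. a k * a k')"
proof -
  have "Max (a ` S) \<in> a ` S"
    using assms by (intro Max_in) auto
  then obtain k0 where k0: "k0 \<in> S" "a k0 = Max (a ` S)"
    by auto
  have "(\<Sum>k\<in>S - {k0}. a k) \<le> (\<Sum>k\<in>S - {k0}. a k * a k0)"
  proof (rule sum_mono)
    fix k assume "k \<in> S - {k0}"
    then have "a k \<le> a k0" using k0 assms by simp
    then show "a k \<le> a k * a k0" by (cases "a k0") auto
  qed
  also have "\<dots> \<le> (\<Sum>k\<in>S - {k0}. \<Sum>k'\<in>S - {k}. a k * a k')"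
  proof (rule sum_mono)
    fix k assume "k \<in> S - {k0}"
    then show "a k * a k0 \<le> (\<Sum>k'\<in>S - {k}. a k * a k')"
      using assms k0 by (intro member_le_sum) auto
  qed
  also have "\<dots> \<le> (\<Sum>k\<in>S. \<Sum>k'\<in>S - {k}. a k * a k')"
    using assms by (intro sum_mono2) auto
  finally show ?thesis
    using assms k0 by (simp add: sum.remove)
qed

lemma card_eq_sum_card_fibres:
  assumes "finite A" "finite B" "g ` A \<subseteq> B"
  shows "card A = (\<Sum>y\<in>B. card {x \<in> A. g x = y})"
  using sum.group[OF assms, of "\<lambda>_. 1::nat"] by simp

(* A k f is the set of users caching the packet f requested by user k; the two packets are then both
   XOR-ed in the transmission for S = insert k (A k f). *)
definition coded_together :: "('k \<Rightarrow> 'f \<Rightarrow> 'k set) \<Rightarrow> 'k \<Rightarrow> 'k \<Rightarrow> 'f \<Rightarrow> 'f \<Rightarrow> bool" where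
  "coded_together A k k' f f' \<longleftrightarrow>
     k \<notin> A k f \<and> k' \<notin> A k' f' \<and> insert k (A k f) = insert k' (A k' f')"

lemma notin_and_insert_eq_iff:
  assumes "k \<in> S"
  shows "(k \<notin> B \<and> insert k B = S) \<longleftrightarrow> B = S - {k}"
  using assms by blast

lemma sum_subsets_card_eq_card_notin:
  fixes A :: "'k \<Rightarrow> 'f \<Rightarrow> 'k set"
  assumes J: "finite J" and P: "finite P" and A: "\<And>k f. k \<in> J \<Longrightarrow> A k f \<subseteq> J"
  shows "(\<Sum>S\<in>{S. S \<subseteq> J \<and> S \<noteq> {}}. \<Sum>k\<in>S. card {f \<in> P. A k f = S - {k}})
       = (\<Sum>k\<in>J. card {f \<in> P. k \<notin> A k f})"
proof -
  let ?SS = "{S. S \<subseteq> J \<and> S \<noteq> {}}"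
  have "(\<Sum>S\<in>?SS. \<Sum>k\<in>S. card {f \<in> P. A k f = S - {k}})
      = (\<Sum>S\<in>?SS. \<Sum>k\<in>{k \<in> J. k \<in> S}. card {f \<in> P. A k f = S - {k}})"
    by (intro sum.cong) auto
  also have "\<dots> = (\<Sum>k\<in>J. \<Sum>S\<in>{S \<in> ?SS. k \<in> S}. card {f \<in> P. A k f = S - {k}})"
    using J by (intro sum.swap_restrict) auto
  also have "\<dots> = (\<Sum>k\<in>J. card {f \<in> P. k \<notin> A k f})"
  proof (rule sum.cong[OF refl])
    fix k assume k: "k \<in> J"
    have "card {f \<in> P. k \<notin> A k f}
        = (\<Sum>S\<in>{S \<in> ?SS. k \<in> S}. card {f \<in> {f \<in> P. k \<notin> A k f}. insert k (A k f) = S})"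
      using J P A k by (intro card_eq_sum_card_fibres) auto
    also have "\<dots> = (\<Sum>S\<in>{S \<in> ?SS. k \<in> S}. card {f \<in> P. A k f = S - {k}})"
      by (intro sum.cong arg_cong[where f = card]) auto
    finally show "(\<Sum>S\<in>{S \<in> ?SS. k \<in> S}. card {f \<in> P. A k f = S - {k}}) = card {f \<in> P. k \<notin> A k f}" ..
  qed
  finally show ?thesis .
qed

lemma card_coded_together_eq_sum_subsets:
  fixes A :: "'k \<Rightarrow> 'f \<Rightarrow> 'k set"
  assumes J: "finite J" and P: "finite P" and A: "\<And>k f. k \<in> J \<Longrightarrow> A k f \<subseteq> J" and k: "k \<in> J"
  shows "card {(f, f') \<in> P \<times> P. coded_together A k k' f f'}
       = (\<Sum>S\<in>{S. S \<subseteq> J \<and> S \<noteq> {} \<and> k \<in> S \<and> k' \<in> S}.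
            card {f \<in> P. A k f = S - {k}} * card {f \<in> P. A k' f = S - {k'}})"
proof -
  let ?C = "{(f, f') \<in> P \<times> P. coded_together A k k' f f'}"
  let ?T = "{S. S \<subseteq> J \<and> S \<noteq> {} \<and> k \<in> S \<and> k' \<in> S}"
  let ?V = "\<lambda>k S. {f \<in> P. A k f = S - {k}}"
  have "finite ?C"
    using P by (intro finite_subset[OF _ finite_cartesian_product[OF P P]]) auto
  moreover have "insert k (A k (fst x)) \<in> ?T" if "x \<in> ?C" for x
  proof -
    have "k' \<in> insert k (A k (fst x))"
      using that by (auto simp: coded_together_def)
    then show ?thesis
      using A k by auto
  qed
  then have "(\<lambda>x. insert k (A k (fst x))) ` ?C \<subseteq> ?T"
    by (rule image_subsetI)
  ultimately have "card ?C = (\<Sum>S\<in>?T. card {x \<in> ?C. insert k (A k (fst x)) = S})"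
    using J by (intro card_eq_sum_card_fibres) auto
  also have "\<dots> = (\<Sum>S\<in>?T. card (?V k S) * card (?V k' S))"
  proof (rule sum.cong[OF refl])
    fix S assume "S \<in> ?T"
    then have "k \<in> S" "k' \<in> S"
      by auto
    then have "coded_together A k k' f f' \<and> insert k (A k f) = S \<longleftrightarrow> A k f = S - {k} \<and> A k' f' = S - {k'}"
      for f f'
      unfolding coded_together_def by (metis notin_and_insert_eq_iff)
    then have "{x \<in> ?C. insert k (A k (fst x)) = S} = ?V k S \<times> ?V k' S"
      by (intro set_eqI) (simp add: split_paired_all conj_ac)
    then show "card {x \<in> ?C. insert k (A k (fst x)) = S} = card (?V k S) * card (?V k' S)"
      by (simp add: card_cartesian_product)
  qed
  finally show ?thesis .
qed

lemma sum_subsets_card_products_eq_card_coded_together: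
  fixes A :: "'k \<Rightarrow> 'f \<Rightarrow> 'k set"
  assumes J: "finite J" and P: "finite P" and A: "\<And>k f. k \<in> J \<Longrightarrow> A k f \<subseteq> J"
  shows "(\<Sum>S\<in>{S. S \<subseteq> J \<and> S \<noteq> {}}. \<Sum>k\<in>S. \<Sum>k'\<in>S - {k}.
            card {f \<in> P. A k f = S - {k}} * card {f \<in> P. A k' f = S - {k'}})
       = (\<Sum>k\<in>J. \<Sum>k'\<in>J - {k}. card {(f, f') \<in> P \<times> P. coded_together A k k' f f'})"
proof -
  let ?SS = "{S. S \<subseteq> J \<and> S \<noteq> {}}"
  let ?h = "\<lambda>k k' S. card {f \<in> P. A k f = S - {k}} * card {f \<in> P. A k' f = S - {k'}}"
  have "(\<Sum>k\<in>S. \<Sum>k'\<in>S - {k}. ?h k k' S) = (\<Sum>k\<in>{k \<in> J. k \<in> S}. \<Sum>k'\<in>{k' \<in> J - {k}. k' \<in> S}. ?h k k' S)"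
    if "S \<in> ?SS" for S
  proof -
    have "S = {k \<in> J. k \<in> S}" "\<And>k. S - {k} = {k' \<in> J - {k}. k' \<in> S}"
      using that by auto
    then show ?thesis
      by simp
  qed
  then have "(\<Sum>S\<in>?SS. \<Sum>k\<in>S. \<Sum>k'\<in>S - {k}. ?h k k' S)
      = (\<Sum>S\<in>?SS. \<Sum>k\<in>{k \<in> J. k \<in> S}. \<Sum>k'\<in>{k' \<in> J - {k}. k' \<in> S}. ?h k k' S)"
    by (rule sum.cong[OF refl])
  also have "\<dots> = (\<Sum>k\<in>J. \<Sum>S\<in>{S \<in> ?SS. k \<in> S}. \<Sum>k'\<in>{k' \<in> J - {k}. k' \<in> S}. ?h k k' S)"
    using J by (intro sum.swap_restrict) auto
  also have "\<dots> = (\<Sum>k\<in>J. \<Sum>k'\<in>J - {k}. \<Sum>S\<in>{S \<in> {S \<in> ?SS. k \<in> S}. k' \<in> S}. ?h k k' S)"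
    using J by (intro sum.cong[OF refl] sum.swap_restrict) auto
  also have "\<dots> = (\<Sum>k\<in>J. \<Sum>k'\<in>J - {k}. card {(f, f') \<in> P \<times> P. coded_together A k k' f f'})"
  proof (intro sum.cong refl)
    fix k k' assume "k \<in> J"
    have "{S \<in> {S \<in> ?SS. k \<in> S}. k' \<in> S} = {S. S \<subseteq> J \<and> S \<noteq> {} \<and> k \<in> S \<and> k' \<in> S}"
      by auto
    with card_coded_together_eq_sum_subsets[where k' = k', OF J P A \<open>k \<in> J\<close>]
    show "(\<Sum>S\<in>{S \<in> {S \<in> ?SS. k \<in> S}. k' \<in> S}. ?h k k' S) = card {(f, f') \<in> P \<times> P. coded_together A k k' f f'}"
      by simp
  qed
  finally show ?thesis .
qed

definition collisions :: "nat \<Rightarrow> nat \<Rightarrow> (nat \<Rightarrow> nat \<Rightarrow> nat set) \<Rightarrow> (nat \<Rightarrow> nat) \<Rightarrow> nat" where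
  "collisions K F Sset d = (\<Sum>k\<in>{1..K}. \<Sum>k'\<in>{1..K} - {k}.
     card {(f, f') \<in> {0..<F} \<times> {0..<F}. coded_together (\<lambda>k. Sset (d k)) k k' f f'})"

lemma R_nd_lower_bound:
  assumes S: "\<And>n f. Sset n f \<subseteq> {1..K}" and F: "0 < F"
  shows "real (\<Sum>k\<in>{1..K}. card {f \<in> {0..<F}. k \<notin> Sset (d k) f}) - real (collisions K F Sset d)
           \<le> real F * R_nd K F Sset d"
proof -
  let ?SS = "{S. S \<subseteq> {1..K} \<and> S \<noteq> {}}"
  let ?a = "\<lambda>k S. card (Vset F Sset d k (S - {k}))"
  have "(\<Sum>k\<in>{1..K}. card {f \<in> {0..<F}. k \<notin> Sset (d k) f}) = (\<Sum>S\<in>?SS. \<Sum>k\<in>S. ?a k S)"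
    unfolding Vset_def using S by (intro sum_subsets_card_eq_card_notin[symmetric]) auto
  also have "\<dots> \<le> (\<Sum>S\<in>?SS. Max ((\<lambda>k. ?a k S) ` S) + (\<Sum>k\<in>S. \<Sum>k'\<in>S - {k}. ?a k S * ?a k' S))"
    by (intro sum_mono sum_le_Max_add_sum_products) (auto intro: finite_subset)
  also have "\<dots> = (\<Sum>S\<in>?SS. Max ((\<lambda>k. ?a k S) ` S)) + collisions K F Sset d"
    unfolding sum.distrib collisions_def Vset_def using S
    by (subst sum_subsets_card_products_eq_card_coded_together) auto
  finally have "real (\<Sum>k\<in>{1..K}. card {f \<in> {0..<F}. k \<notin> Sset (d k) f})
      \<le> (\<Sum>S\<in>?SS. real (Max ((\<lambda>k. ?a k S) ` S))) + real (collisions K F Sset d)"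
    by (simp flip: of_nat_add of_nat_sum)
  moreover have "real F * R_nd K F Sset d = (\<Sum>S\<in>?SS. real (Max ((\<lambda>k. ?a k S) ` S)))"
    using F by (simp add: R_nd_def sum_divide_distrib[symmetric])
  ultimately show ?thesis by linarith
qed

lemma card_uncached_packets_ge:
  assumes "k \<in> {1..K}"
  shows "q * F' - F' \<le> card {f \<in> {0..<q * F'}. k \<notin> cache_of_choice K q c n f}"
proof -
  let ?C = "{f \<in> {0..<q * F'}. c (k, n, f div q) = f mod q}"
  have "inj_on (\<lambda>f. f div q) ?C"
  proof (rule inj_onI)
    fix f g assume "f \<in> ?C" "g \<in> ?C" and div: "f div q = g div q"
    then have "f mod q = g mod q"
      by simp
    with div show "f = g"
      by (metis div_mult_mod_eq)
  qed
  moreover have "(\<lambda>f. f div q) ` ?C \<subseteq> {0..<F'}"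
    by (auto simp: less_mult_imp_div_less mult.commute)
  ultimately have "card ?C \<le> card {0..<F'}"
    by (intro card_inj_on_le) auto
  then have "card ?C \<le> F'"
    by simp
  moreover have "{f \<in> {0..<q * F'}. k \<notin> cache_of_choice K q c n f} = {0..<q * F'} - ?C"
    using assms unfolding cache_of_choice_def by auto
  moreover have "card ({0..<q * F'} - ?C) = q * F' - card ?C"
    by (subst card_Diff_subset) auto
  ultimately show ?thesis
    by simp
qed

lemma inj_on_PiE_restrict_pairs:
  "inj_on (\<lambda>c. (restrict (\<lambda>j. (c (\<alpha> j), c (\<beta> j))) J, restrict c (I - (\<alpha> ` J \<union> \<beta> ` J)))) (PiE I X)"
proof (rule inj_onI)
  fix c c' assume c: "c \<in> PiE I X" and c': "c' \<in> PiE I X"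
  assume "(restrict (\<lambda>j. (c (\<alpha> j), c (\<beta> j))) J, restrict c (I - (\<alpha> ` J \<union> \<beta> ` J)))
    = (restrict (\<lambda>j. (c' (\<alpha> j), c' (\<beta> j))) J, restrict c' (I - (\<alpha> ` J \<union> \<beta> ` J)))"
  then have pairs: "restrict (\<lambda>j. (c (\<alpha> j), c (\<beta> j))) J = restrict (\<lambda>j. (c' (\<alpha> j), c' (\<beta> j))) J"
    and rest: "restrict c (I - (\<alpha> ` J \<union> \<beta> ` J)) = restrict c' (I - (\<alpha> ` J \<union> \<beta> ` J))"
    by simp_all
  have "c (\<alpha> j) = c' (\<alpha> j) \<and> c (\<beta> j) = c' (\<beta> j)" if "j \<in> J" for j
    using fun_cong[OF pairs, of j] that by simp
  moreover have "c i = c' i" if "i \<in> I - (\<alpha> ` J \<union> \<beta> ` J)" for i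
    using fun_cong[OF rest, of i] that by simp
  ultimately have "c i = c' i" if "i \<in> I" for i
    using that by blast
  with c c' show "c = c'"
    by (intro PiE_ext) auto
qed

lemma card_PiE_pair_constraints_le:
  fixes \<alpha> \<beta> :: "'j \<Rightarrow> 'i"
  assumes I: "finite I" and Q: "finite Q"
    and inj: "inj_on \<alpha> J" "inj_on \<beta> J" and disj: "\<alpha> ` J \<inter> \<beta> ` J = {}"
    and sub: "\<alpha> ` J \<subseteq> I" "\<beta> ` J \<subseteq> I"
  shows "card {c \<in> PiE I (\<lambda>_. Q). \<forall>j\<in>J. R j (c (\<alpha> j)) (c (\<beta> j))}
       \<le> (\<Prod>j\<in>J. card {(x, y) \<in> Q \<times> Q. R j x y}) * card Q ^ (card I - 2 * card J)"
proof -
  let ?Rs = "\<lambda>j. {(x, y) \<in> Q \<times> Q. R j x y}"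
  let ?E = "{c \<in> PiE I (\<lambda>_. Q). \<forall>j\<in>J. R j (c (\<alpha> j)) (c (\<beta> j))}"
  let ?P = "\<alpha> ` J \<union> \<beta> ` J"
  let ?split = "\<lambda>c. (restrict (\<lambda>j. (c (\<alpha> j), c (\<beta> j))) J, restrict c (I - ?P))"
  have J: "finite J"
    using finite_imageD[OF finite_subset[OF sub(1) I] inj(1)] .
  have "card ?P = card (\<alpha> ` J) + card (\<beta> ` J)"
    using J disj by (intro card_Un_disjoint) auto
  then have card_P: "card ?P = 2 * card J"
    using inj by (simp add: card_image)
  have "finite (?Rs j)" for j
    using Q by (intro finite_subset[OF _ finite_cartesian_product[OF Q Q]]) auto
  then have "finite (PiE J ?Rs \<times> PiE (I - ?P) (\<lambda>_. Q))"
    using I J Q by (intro finite_cartesian_product finite_PiE) auto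
  moreover have "inj_on ?split ?E"
    using inj_on_PiE_restrict_pairs by (rule inj_on_subset) auto
  moreover have "?split c \<in> PiE J ?Rs \<times> PiE (I - ?P) (\<lambda>_. Q)" if "c \<in> ?E" for c
  proof -
    have "c i \<in> Q" if "i \<in> I" for i
      using \<open>c \<in> ?E\<close> that by (auto simp: PiE_iff)
    then show ?thesis
      using that sub by (auto simp: restrict_PiE_iff)
  qed
  ultimately have "card ?E \<le> card (PiE J ?Rs \<times> PiE (I - ?P) (\<lambda>_. Q))"
    by (intro card_inj_on_le image_subsetI)
  also have "\<dots> = (\<Prod>j\<in>J. card (?Rs j)) * card Q ^ card (I - ?P)"
    using I J by (simp add: card_cartesian_product card_PiE)
  also have "card (I - ?P) = card I - 2 * card J"
    using I sub card_P by (subst card_Diff_subset) (auto intro: finite_subset)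
  finally show ?thesis .
qed

lemma coded_together_cache_of_choiceD:
  assumes "coded_together (\<lambda>k. cache_of_choice K q c (n k)) k k' f f'" and j: "j \<in> {1..K}"
  shows "((j = k \<or> c (j, n k, f div q) = f mod q) \<longleftrightarrow> (j = k' \<or> c (j, n k', f' div q) = f' mod q))
    \<and> (j = k \<longrightarrow> c (j, n k, f div q) \<noteq> f mod q) \<and> (j = k' \<longrightarrow> c (j, n k', f' div q) \<noteq> f' mod q)"
proof -
  let ?A = "cache_of_choice K q c (n k) f" and ?B = "cache_of_choice K q c (n k') f'"
  have "j \<in> ?A \<longleftrightarrow> c (j, n k, f div q) = f mod q" "j \<in> ?B \<longleftrightarrow> c (j, n k', f' div q) = f' mod q"
    using j by (simp_all add: cache_of_choice_def)
  moreover have "k \<notin> ?A" "k' \<notin> ?B" "j \<in> insert k ?A \<longleftrightarrow> j \<in> insert k' ?B"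
    using assms(1) unfolding coded_together_def by simp_all
  ultimately show ?thesis
    by auto
qed

lemma card_pairs_fixing_one_coordinate:
  assumes "a < q" "b < (q::nat)"
  shows "card {(x, y) \<in> {0..<q} \<times> {0..<q}. x \<noteq> a \<and> y = b} = q - 1"
    and "card {(x, y) \<in> {0..<q} \<times> {0..<q}. x = a \<and> y \<noteq> b} = q - 1"
proof -
  have "{(x, y) \<in> {0..<q} \<times> {0..<q}. x \<noteq> a \<and> y = b} = ({0..<q} - {a}) \<times> {b}"
    and "{(x, y) \<in> {0..<q} \<times> {0..<q}. x = a \<and> y \<noteq> b} = {a} \<times> ({0..<q} - {b})"
    using assms by auto
  then show "card {(x, y) \<in> {0..<q} \<times> {0..<q}. x \<noteq> a \<and> y = b} = q - 1"
    and "card {(x, y) \<in> {0..<q} \<times> {0..<q}. x = a \<and> y \<noteq> b} = q - 1"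
    using assms by (simp_all add: card_cartesian_product)
qed

lemma card_pairs_eq_iff:
  assumes "a < q" "b < (q::nat)"
  shows "card {(x, y) \<in> {0..<q} \<times> {0..<q}. (x = a) = (y = b)} = 1 + (q - 1)^2"
proof -
  have "{(x, y) \<in> {0..<q} \<times> {0..<q}. (x = a) = (y = b)} = insert (a, b) (({0..<q} - {a}) \<times> ({0..<q} - {b}))"
    using assms by auto
  then show ?thesis
    using assms by (simp add: card_cartesian_product power2_eq_square)
qed

lemma card_coded_together_choices_le:
  assumes q: "0 < q" and k: "k \<in> {1..K}" "k' \<in> {1..K}" "k \<noteq> k'"
    and n: "n k \<in> {1..N}" "n k' \<in> {1..N}" "n k \<noteq> n k'"
    and f: "f < q * F'" "f' < q * F'"
  shows "card {c \<in> placement_choices K N F' q. coded_together (\<lambda>k. cache_of_choice K q c (n k)) k k' f f'}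
           \<le> (q - 1)^2 * (1 + (q - 1)^2)^(K - 2) * q ^ (K * N * F' - 2 * K)"
proof -
  define I where "I = {1..K} \<times> {1..N} \<times> {0..<F'}"
  \<comment> \<open>the constraint a collision puts on the choices of user j in the groups of f and f'\<close>
  define R where "R j a b \<longleftrightarrow> ((j = k \<or> a = f mod q) \<longleftrightarrow> (j = k' \<or> b = f' mod q))
      \<and> (j = k \<longrightarrow> a \<noteq> f mod q) \<and> (j = k' \<longrightarrow> b \<noteq> f' mod q)" for j a b
  let ?Rs = "\<lambda>j. {(a, b) \<in> {0..<q} \<times> {0..<q}. R j a b}"
  have groups: "f div q < F'" "f' div q < F'"
    using f by (auto simp: less_mult_imp_div_less mult.commute)
  have "f mod q < q" "f' mod q < q"
    using q by auto
  then have "card (?Rs k) = q - 1" "card (?Rs k') = q - 1"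
    using k(3) card_pairs_fixing_one_coordinate[of "f mod q" q "f' mod q"] by (simp_all add: R_def conj_commute)
  moreover have "card (?Rs j) = 1 + (q - 1)^2" if "j \<in> {1..K} - {k} - {k'}" for j
    using that \<open>f mod q < q\<close> \<open>f' mod q < q\<close> card_pairs_eq_iff[of "f mod q" q "f' mod q"] by (simp add: R_def)
  moreover have "(\<Prod>j\<in>{1..K}. card (?Rs j)) = card (?Rs k) * (card (?Rs k') * (\<Prod>j\<in>{1..K} - {k} - {k'}. card (?Rs j)))"
    using k by (simp add: prod.remove[of _ k] prod.remove[of _ k'])
  ultimately have prod_Rs: "(\<Prod>j\<in>{1..K}. card (?Rs j)) = (q - 1)^2 * (1 + (q - 1)^2)^(K - 2)"
    using k by (simp add: card_Diff_subset power2_eq_square numeral_2_eq_2)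
  have "{c \<in> placement_choices K N F' q. coded_together (\<lambda>k. cache_of_choice K q c (n k)) k k' f f'}
      \<subseteq> {c \<in> PiE I (\<lambda>_. {0..<q}). \<forall>j\<in>{1..K}. R j (c (j, n k, f div q)) (c (j, n k', f' div q))}"
    using coded_together_cache_of_choiceD unfolding placement_choices_def I_def R_def by blast
  moreover have "finite (PiE I (\<lambda>_. {0..<q}))"
    unfolding I_def by (intro finite_PiE) auto
  ultimately have "card {c \<in> placement_choices K N F' q. coded_together (\<lambda>k. cache_of_choice K q c (n k)) k k' f f'}
      \<le> card {c \<in> PiE I (\<lambda>_. {0..<q}). \<forall>j\<in>{1..K}. R j (c (j, n k, f div q)) (c (j, n k', f' div q))}"
    by (intro card_mono) auto
  also have "\<dots> \<le> (\<Prod>j\<in>{1..K}. card (?Rs j)) * q ^ (card I - 2 * K)"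
  proof -
    have "(\<lambda>j. (j, n k, f div q)) ` {1..K} \<inter> (\<lambda>j. (j, n k', f' div q)) ` {1..K} = {}"
      using n by auto
    moreover have "(\<lambda>j. (j, n k, f div q)) ` {1..K} \<subseteq> I" "(\<lambda>j. (j, n k', f' div q)) ` {1..K} \<subseteq> I"
      using n groups by (auto simp: I_def)
    ultimately show ?thesis
      using card_PiE_pair_constraints_le[of I "{0..<q}" "\<lambda>j. (j, n k, f div q)" "{1..K}" "\<lambda>j. (j, n k', f' div q)" R]
      by (simp add: I_def inj_on_def)
  qed
  finally show ?thesis
    using prod_Rs by (simp add: I_def card_cartesian_product mult.assoc)
qed

lemma collision_probability_le:
  assumes q: "0 < q" and k: "k \<in> {1..K}" "k' \<in> {1..K}" "k \<noteq> k'"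
    and n: "n k \<in> {1..N}" "n k' \<in> {1..N}" "n k \<noteq> n k'"
    and f: "f < q * F'" "f' < q * F'"
  defines "x \<equiv> 1 / real q * (1 - 1 / real q)"
  shows "real (card {c \<in> placement_choices K N F' q. coded_together (\<lambda>k. cache_of_choice K q c (n k)) k k' f f'})
           \<le> x^2 * (1 - 2 * x)^(K - 2) * real (card (placement_choices K N F' q))"
proof -
  have "F' \<noteq> 0"
    using f(1) by (metis mult_0_right not_less0)
  then have "2 * 1 \<le> N * F'"
    using n by (intro mult_le_mono) auto
  then have "K * N * F' = 2 * K + (K * N * F' - 2 * K)"
    by (simp add: mult.assoc)
  then have card_\<Omega>: "real (card (placement_choices K N F' q)) = real q ^ (2 * K) * real q ^ (K * N * F' - 2 * K)"
    unfolding placement_choices_def by (simp add: card_PiE card_cartesian_product power_add[symmetric] mult.assoc)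
  have q_x: "real q ^ 2 * x = real (q - 1)" and q_1_2x: "real q ^ 2 * (1 - 2 * x) = real (1 + (q - 1)^2)"
    using q by (simp_all add: x_def of_nat_diff field_simps power2_eq_square)
  have "2 * K = 2 * 2 + 2 * (K - 2)"
    using k by auto
  then have "real q ^ (2 * K) = (real q ^ 2) ^ 2 * (real q ^ 2) ^ (K - 2)"
    by (simp only: power_add power_mult)
  with card_\<Omega> have "x^2 * (1 - 2 * x)^(K - 2) * real (card (placement_choices K N F' q))
      = (real q ^ 2 * x)^2 * (real q ^ 2 * (1 - 2 * x))^(K - 2) * real q ^ (K * N * F' - 2 * K)"
    by (simp add: power_mult_distrib)
  also have "\<dots> = real (q - 1)^2 * real (1 + (q - 1)^2)^(K - 2) * real q ^ (K * N * F' - 2 * K)"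
    unfolding q_x q_1_2x ..
  also have "\<dots> = real ((q - 1)^2 * (1 + (q - 1)^2)^(K - 2) * q ^ (K * N * F' - 2 * K))"
    by (simp only: of_nat_mult of_nat_power)
  finally show ?thesis
    using card_coded_together_choices_le[OF assms(1-9)] by (simp only: of_nat_le_iff)
qed

lemma R_nd_cache_of_choice_ge:
  assumes "0 < q * F'"
  shows "real K * (real (q * F') - real F') - real (collisions K (q * F') (cache_of_choice K q c) d)
           \<le> real (q * F') * R_nd K (q * F') (cache_of_choice K q c) d"
proof -
  have "real K * (real (q * F') - real F') = (\<Sum>k\<in>{1..K}. real (q * F' - F'))"
    using assms by (simp add: of_nat_diff)
  also have "\<dots> \<le> (\<Sum>k\<in>{1..K}. real (card {f \<in> {0..<q * F'}. k \<notin> cache_of_choice K q c (d k) f}))"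
    by (intro sum_mono of_nat_mono card_uncached_packets_ge) simp
  also have "\<dots> = real (\<Sum>k\<in>{1..K}. card {f \<in> {0..<q * F'}. k \<notin> cache_of_choice K q c (d k) f})"
    by (rule of_nat_sum[symmetric])
  finally have uncached: "real K * (real (q * F') - real F')
      \<le> real (\<Sum>k\<in>{1..K}. card {f \<in> {0..<q * F'}. k \<notin> cache_of_choice K q c (d k) f})" .
  have "cache_of_choice K q c n f \<subseteq> {1..K}" for n f
    by (auto simp: cache_of_choice_def)
  from R_nd_lower_bound[of "cache_of_choice K q c" K "q * F'" d, OF this assms] uncached show ?thesis
    by linarith
qed

lemma sum_collisions_le:
  assumes q: "0 < q" and d: "\<forall>k\<in>{1..K}. d k \<in> {1..N}" "inj_on d {1..K}"
  defines "x \<equiv> 1 / real q * (1 - 1 / real q)"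
  shows "(\<Sum>c\<in>placement_choices K N F' q. real (collisions K (q * F') (cache_of_choice K q c) d))
           \<le> real K * (real K - 1) * real (q * F') ^ 2 * (x^2 * (1 - 2 * x)^(K - 2))
             * real (card (placement_choices K N F' q))"
proof -
  let ?\<Omega> = "placement_choices K N F' q"
  let ?P = "{0..<q * F'} \<times> {0..<q * F'}"
  let ?C = "\<lambda>c k k' f f'. coded_together (\<lambda>k. cache_of_choice K q c (d k)) k k' f f'"
  have fin: "finite ?\<Omega>"
    unfolding placement_choices_def by (intro finite_PiE) auto
  have "(\<Sum>c\<in>?\<Omega>. collisions K (q * F') (cache_of_choice K q c) d)
      = (\<Sum>k\<in>{1..K}. \<Sum>c\<in>?\<Omega>. \<Sum>k'\<in>{1..K} - {k}. card {(f, f') \<in> ?P. ?C c k k' f f'})"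
    unfolding collisions_def by (rule sum.swap)
  also have "\<dots> = (\<Sum>k\<in>{1..K}. \<Sum>k'\<in>{1..K} - {k}. \<Sum>c\<in>?\<Omega>. card {(f, f') \<in> ?P. ?C c k k' f f'})"
    by (intro sum.cong refl sum.swap)
  also have "\<dots> = (\<Sum>k\<in>{1..K}. \<Sum>k'\<in>{1..K} - {k}. \<Sum>ff\<in>?P. card {c \<in> ?\<Omega>. ?C c k k' (fst ff) (snd ff)})"
  proof (intro sum.cong refl)
    fix k k'
    have "{(f, f') \<in> ?P. ?C c k k' f f'} = {ff \<in> ?P. ?C c k k' (fst ff) (snd ff)}" for c
      by auto
    then show "(\<Sum>c\<in>?\<Omega>. card {(f, f') \<in> ?P. ?C c k k' f f'})
        = (\<Sum>ff\<in>?P. card {c \<in> ?\<Omega>. ?C c k k' (fst ff) (snd ff)})"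
      using fin by (simp only:) (rule sum_multicount_gen, auto)
  qed
  finally have "(\<Sum>c\<in>?\<Omega>. real (collisions K (q * F') (cache_of_choice K q c) d))
      = (\<Sum>k\<in>{1..K}. \<Sum>k'\<in>{1..K} - {k}. \<Sum>ff\<in>?P. real (card {c \<in> ?\<Omega>. ?C c k k' (fst ff) (snd ff)}))"
    by (simp flip: of_nat_sum)
  also have "\<dots> \<le> (\<Sum>k\<in>{1..K}. \<Sum>k'\<in>{1..K} - {k}. \<Sum>ff\<in>?P. x^2 * (1 - 2 * x)^(K - 2) * real (card ?\<Omega>))"
  proof (intro sum_mono)
    fix k k' ff assume "k \<in> {1..K}" "k' \<in> {1..K} - {k}" "ff \<in> ?P"
    moreover from this have "d k \<noteq> d k'"
      using d(2) by (auto dest: inj_onD)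
    ultimately show "real (card {c \<in> ?\<Omega>. ?C c k k' (fst ff) (snd ff)}) \<le> x^2 * (1 - 2 * x)^(K - 2) * real (card ?\<Omega>)"
      using collision_probability_le[OF q, of k K k' d N "fst ff" F' "snd ff"] d(1)
      unfolding x_def by (auto simp: mem_Times_iff)
  qed
  also have "\<dots> = real K * (real K - 1) * real (q * F') ^ 2 * (x^2 * (1 - 2 * x)^(K - 2)) * real (card ?\<Omega>)"
    by (cases K) (simp_all add: card_cartesian_product power2_eq_square)
  finally show ?thesis .
qed

lemma power_one_minus_le_exp:
  fixes y :: real
  assumes "y \<le> 1"
  shows "(1 - y) ^ n \<le> exp (- y * real n)"
proof -
  have "(1 - y) ^ n \<le> exp (- y) ^ n"
    using assms exp_ge_add_one_self[of "- y"] by (intro power_mono) auto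
  then show ?thesis
    by (simp add: exp_of_nat_mult[symmetric] mult.commute)
qed

lemma collision_term_le_half:
  fixes p F :: real and K :: nat
  assumes p: "0 < p" "p \<le> 1" and F: "0 \<le> F"
    and bound: "F \<le> (1 - p) / (2 * real K * p) * exp (2 * (real K - 1) * (p * (1 - p)))"
  shows "real K * (real K - 1) * F * ((p * (1 - p))^2 * (1 - 2 * (p * (1 - p)))^(K - 2))
           \<le> real K * (1 - p) / 2"
proof (cases "K \<ge> 2")
  case False
  then have "real K * (real K - 1) = 0"
    by (cases K) auto
  then show ?thesis
    using p by (simp only: mult_zero_left) simp
next
  case K: True
  define x where "x = p * (1 - p)"
  have "0 \<le> (2 * p - 1)^2"
    by simp
  then have x: "0 \<le> x" "x \<le> 1/4"
    using p by (auto simp: x_def power2_eq_square algebra_simps)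
  have pow: "(1 - 2 * x)^(K - 2) \<le> exp (- (2 * x) * real (K - 2))"
    using x by (intro power_one_minus_le_exp) auto
  have "real K * (real K - 1) * F * (x^2 * (1 - 2 * x)^(K - 2))
      \<le> real K * (real K - 1) * ((1 - p) / (2 * real K * p) * exp (2 * (real K - 1) * x))
          * (x^2 * exp (- (2 * x) * real (K - 2)))"
    using K p bound F pow x unfolding x_def[symmetric]
    by (intro mult_mono mult_left_mono) auto
  also have "\<dots> = (real K - 1) / 2 * (1 - p) * (x * (1 - p) * exp (2 * x))"
  proof -
    have "exp (2 * (real K - 1) * x) * exp (- (2 * x) * real (K - 2)) = exp (2 * x)"
      using K by (simp add: exp_add[symmetric] of_nat_diff algebra_simps)
    moreover have "x^2 / p = x * (1 - p)"
      using p by (simp add: x_def power2_eq_square)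
    moreover have "real K * (real K - 1) * ((1 - p) / (2 * real K * p) * exp (2 * (real K - 1) * x))
          * (x^2 * exp (- (2 * x) * real (K - 2)))
        = (real K - 1) / 2 * (1 - p) * (x^2 / p * (exp (2 * (real K - 1) * x) * exp (- (2 * x) * real (K - 2))))"
      using K p by (simp add: field_simps)
    ultimately show ?thesis
      by simp
  qed
  also have "\<dots> \<le> (real K - 1) / 2 * (1 - p) * 1"
  proof -
    have "exp (2 * x) \<le> 2"
      using exp_bound_half[of "2 * x"] x by simp
    then have "x * (1 - p) * exp (2 * x) \<le> (1/4) * 1 * 2"
      using x p by (intro mult_mono) auto
    then show ?thesis
      using K p by (intro mult_left_mono) auto
  qed
  also have "\<dots> \<le> real K * (1 - p) / 2"
    using p by (simp add: field_simps)
  finally show ?thesis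
    unfolding x_def .
qed

lemma expected_R_nd_ge:
  assumes q: "0 < q" and F': "0 < F'" and d: "\<forall>k\<in>{1..K}. d k \<in> {1..N}" "inj_on d {1..K}"
  defines "x \<equiv> 1 / real q * (1 - 1 / real q)"
  shows "real K * (1 - 1 / real q) - real K * (real K - 1) * real (q * F') * (x^2 * (1 - 2 * x)^(K - 2))
           \<le> measure_pmf.expectation (pmf_of_set (placement_choices K N F' q))
               (\<lambda>c. R_nd K (q * F') (cache_of_choice K q c) d)"
proof -
  let ?\<Omega> = "placement_choices K N F' q"
  let ?F = "real (q * F')"
  let ?R = "\<lambda>c. R_nd K (q * F') (cache_of_choice K q c) d"
  let ?P = "x^2 * (1 - 2 * x)^(K - 2)"
  have fin: "finite ?\<Omega>"
    unfolding placement_choices_def by (intro finite_PiE) auto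
  have "?\<Omega> \<noteq> {}"
    using q by (simp add: placement_choices_def PiE_eq_empty_iff)
  with fin have \<Omega>: "0 < real (card ?\<Omega>)"
    by (simp add: card_gt_0_iff)
  have F: "0 < ?F"
    using q F' by simp
  have "real (card ?\<Omega>) * (real K * (?F - real F'))
        - (\<Sum>c\<in>?\<Omega>. real (collisions K (q * F') (cache_of_choice K q c) d))
      = (\<Sum>c\<in>?\<Omega>. real K * (?F - real F') - real (collisions K (q * F') (cache_of_choice K q c) d))"
    by (simp add: sum_subtractf)
  also have "\<dots> \<le> (\<Sum>c\<in>?\<Omega>. ?F * ?R c)"
    using q F' by (intro sum_mono R_nd_cache_of_choice_ge) simp
  finally have "real (card ?\<Omega>) * (real K * (?F - real F') - real K * (real K - 1) * ?F ^ 2 * ?P)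
      \<le> ?F * (\<Sum>c\<in>?\<Omega>. ?R c)"
    using sum_collisions_le[OF q d, of F'] unfolding x_def[symmetric]
    by (simp add: sum_distrib_left algebra_simps)
  then have "(real K * (?F - real F') - real K * (real K - 1) * ?F ^ 2 * ?P) / ?F
      \<le> (\<Sum>c\<in>?\<Omega>. ?R c) / real (card ?\<Omega>)"
    using F \<Omega> by (simp add: pos_divide_le_eq pos_le_divide_eq mult.commute)
  moreover have "(real K * (?F - real F') - real K * (real K - 1) * ?F ^ 2 * ?P) / ?F
      = real K * (?F - real F') / ?F - real K * (real K - 1) * ?F * ?P"
    using F by (simp add: diff_divide_distrib power2_eq_square)
  moreover have "real K * (?F - real F') / ?F = real K * (1 - 1 / real q)"
    using q F' by (simp add: field_simps)
  moreover have "measure_pmf.expectation (pmf_of_set ?\<Omega>) ?R = (\<Sum>c\<in>?\<Omega>. ?R c) / real (card ?\<Omega>)"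
    by (rule integral_pmf_of_set[OF \<open>?\<Omega> \<noteq> {}\<close> fin])
  ultimately show ?thesis
    by simp
qed

lemma nat_ceiling_pos_and_inverse_le:
  fixes x :: real
  assumes "0 < x"
  shows "0 < nat \<lceil>x\<rceil>" "1 / real (nat \<lceil>x\<rceil>) \<le> 1 / x"
proof -
  have "x \<le> real (nat \<lceil>x\<rceil>)"
    by linarith
  with assms show "0 < nat \<lceil>x\<rceil>" "1 / real (nat \<lceil>x\<rceil>) \<le> 1 / x"
    by (simp_all add: frac_le)
qed

theorem theorem4:
  fixes N K F' :: nat and M :: real and d :: "nat \<Rightarrow> nat"
  assumes "K < N" and "0 < K"
    and "0 < M" and "M \<le> real N"
    and "0 < F'"
    and "\<forall>k\<in>{1..K}. d k \<in> {1..N}" and "inj_on d {1..K}"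
    and "q = nat \<lceil>real N / M\<rceil>"
    and "F = q * F'"
    and "t = real K / real q"
    and "real F \<le> real q / (2 * real K) * (1 - 1 / real q)
                   * exp (2 * t * (1 - t / real K) * (1 - 1 / real K))"
  shows "measure_pmf.expectation (pmf_of_set (placement_choices K N F' q))
           (\<lambda>c. R_nd K F (cache_of_choice K q c) d)
         \<ge> 1/2 * (1 - M / real N) * real K"
proof -
  define p where "p = 1 / real q"
  have "0 < real N / M"
    using assms(1,3) by simp
  from nat_ceiling_pos_and_inverse_le[OF this] have q: "0 < q" and "p \<le> M / real N"
    unfolding assms(8) p_def by simp_all
  then have pM: "1 - M / real N \<le> 1 - p" and p: "0 < p" "p \<le> 1"
    by (auto simp: p_def)
  have "2 * t * (1 - t / real K) * (1 - 1 / real K) = 2 * (real K - 1) * (p * (1 - p))"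
    unfolding assms(10) using assms(2) q by (simp add: p_def field_simps)
  moreover have "real q / (2 * real K) * (1 - 1 / real q) = (1 - p) / (2 * real K * p)"
    by (simp add: p_def)
  ultimately have "real F \<le> (1 - p) / (2 * real K * p) * exp (2 * (real K - 1) * (p * (1 - p)))"
    using assms(11) by simp
  then have "real K * (real K - 1) * real F * ((p * (1 - p))^2 * (1 - 2 * (p * (1 - p)))^(K - 2))
      \<le> real K * (1 - p) / 2"
    using p by (intro collision_term_le_half) auto
  with expected_R_nd_ge[OF q assms(5-7)] have "real K * (1 - p) / 2
      \<le> measure_pmf.expectation (pmf_of_set (placement_choices K N F' q)) (\<lambda>c. R_nd K F (cache_of_choice K q c) d)"
    unfolding assms(9) p_def by linarith
  moreover have "1/2 * (1 - M / real N) * real K \<le> real K * (1 - p) / 2"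
    using mult_right_mono[OF pM, of "real K"] by (simp add: mult.commute)
  ultimately show ?thesis
    by linarith
qed

thm_deps theorem4

end
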